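(* Let $\beta>0$, $x=\tanh\beta$, and let $M_n=\sum_{i=1}^n\sigma(i)$ under the Ising measure $\mathbb{I}_{0,\beta}$. For every $r\ge1$ and $n\ge1$, $$\frac{|\kappa^{(2r)}(M_n)|}{n}\le\sum_{c\in\mathfrak{C}_{2r}}\ \sum_{\delta\in\mathfrak{D}^*_{2r}}A(c)\,B(c,\delta)\,C(\delta),$$ where $A(c)=\frac{(2r)!}{c_1!\cdots c_\ell!}$, $B(c,\delta)=\prod_{d\in D(c)}\frac{x^{\delta_d}}{1-x^{\delta_d}}$ and $C(\delta)=\prod_{k=1}^{2r-1}\delta_k$.
   Context: The Ising measure $\mathbb{I}_{0,\beta}$ gives to $\sigma:\{1,\dots,n\}\to\{\pm1\}$ probability proportional to $\exp(\beta\sum_{i=1}^{n-1}\sigma(i)\sigma(i+1))$. $\kappa^{(s)}(X)$ is the $s$-th cumulant, i.e. $\log\mathbb{E}[e^{zX}]=\sum_{s\ge1}\kappa^{(s)}(X)z^s/s!$. $\mathfrak{C}_{2r}$ is the set of compositions $c=(c_1,\dots,c_\ell)$ of $2r$ (positive integers summing to $2r$), and $D(c)=\{c_1,c_1+c_2,\dots,c_1+\dots+c_{\ell-1}\}$ its descent set. A Dyck path of length $2r$ is a sequence $(\delta_0,\dots,\delta_{2r})$ of nonnegative integers with $\delta_0=\delta_{2r}=0$ and $|\delta_{k+1}-\delta_k|=1$; $\mathfrak{D}^*_{2r}$ is the set of those with $\delta_k\ge1$ for $1\le k\le 2r-1$. *)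

theory Defs
  imports "HOL-Analysis.Analysis" "HOL-Library.FuncSet"
begin

definition configs :: "nat \<Rightarrow> (nat \<Rightarrow> real) set" where
  "configs n = PiE {1..n} (\<lambda>_. {-1, 1})"

definition ising_weight :: "nat \<Rightarrow> real \<Rightarrow> (nat \<Rightarrow> real) \<Rightarrow> real" where
  "ising_weight n \<beta> \<sigma> = exp (\<beta> * (\<Sum>i\<in>{1..<n}. \<sigma> i * \<sigma> (i+1)))"

definition partition_fn :: "nat \<Rightarrow> real \<Rightarrow> real" where
  "partition_fn n \<beta> = (\<Sum>\<sigma>\<in>configs n. ising_weight n \<beta> \<sigma>)"

definition ising_expect :: "nat \<Rightarrow> real \<Rightarrow> ((nat \<Rightarrow> real) \<Rightarrow> real) \<Rightarrow> real" where
  "ising_expect n \<beta> f = (\<Sum>\<sigma>\<in>configs n. ising_weight n \<beta> \<sigma> * f \<sigma>) / partition_fn n \<beta>"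

definition magnetization :: "nat \<Rightarrow> (nat \<Rightarrow> real) \<Rightarrow> real" where
  "magnetization n \<sigma> = (\<Sum>i=1..n. \<sigma> i)"

definition cumulant_M :: "nat \<Rightarrow> real \<Rightarrow> nat \<Rightarrow> real" where
  "cumulant_M n \<beta> s =
     (deriv ^^ s) (\<lambda>z. ln (ising_expect n \<beta> (\<lambda>\<sigma>. exp (z * magnetization n \<sigma>)))) 0"

definition compositions :: "nat \<Rightarrow> nat list set" where
  "compositions m = {c. (\<forall>i\<in>set c. 0 < i) \<and> sum_list c = m}"

definition descent_set :: "nat list \<Rightarrow> nat set" where
  "descent_set c = {sum_list (take j c) | j. 1 \<le> j \<and> j < length c}"

definition dyck_star :: "nat \<Rightarrow> nat list set" where
  "dyck_star m = {\<delta>. length \<delta> = m + 1 \<and> \<delta> ! 0 = 0 \<and> \<delta> ! m = 0 \<and>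
      (\<forall>k<m. \<delta> ! (k+1) = \<delta> ! k + 1 \<or> \<delta> ! k = \<delta> ! (k+1) + 1) \<and>
      (\<forall>k. 1 \<le> k \<and> k \<le> m - 1 \<longrightarrow> 1 \<le> \<delta> ! k)}"

definition coefA :: "nat \<Rightarrow> nat list \<Rightarrow> real" where
  "coefA r c = fact (2*r) / (\<Prod>i<length c. fact (c ! i))"

definition coefB :: "real \<Rightarrow> nat list \<Rightarrow> nat list \<Rightarrow> real" where
  "coefB x c \<delta> = (\<Prod>d\<in>descent_set c. x ^ (\<delta> ! d) / (1 - x ^ (\<delta> ! d)))"

definition coefC :: "nat \<Rightarrow> nat list \<Rightarrow> real" where
  "coefC r \<delta> = (\<Prod>k=1..2*r-1. real (\<delta> ! k))"

end

theory Submission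
  imports Defs "HOL-Computational_Algebra.Polynomial"
begin

(*
  For a real parameter c, the ladder operator L_c acts on sequences indexed by heights h
  by (L_c g)(h) = (c - h) g(h+1) + h g(h-1).  Vectors of formal power series in z are
  propagated by exp(z L_c) and, between two such propagations, multiplied by the diagonal
  weight x^h.  Iterating k times from the unit vector e_0 gives the vector chain c x k.
  The proof has four parts.
   (1) Paths: the coefficients of chain c x k at height 0 are sums over lattice paths of a
       polynomial weight in c times a nonnegative weight seg_weight (how the path is cut
       into k time segments).
   (2) Additivity: chain (c+d) x k (a+b) = chain c x k a * chain d x k b, a binomial
       theorem for L_{c+d}; hence chain N x k 0 = (chain 1 x k 0)^N for natural N.
   (3) Transfer matrix: for c = 1 and x = tanh beta, chain 1 x n 0 is exactly the moment
       generating function F of M_n.  Comparing the polynomials in N behind F^N gives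
       kappa_s = s! * [c^1] of the s-th coefficient, i.e. log F is the linear part in c.
   (4) Estimates: only Dyck paths contribute to that linear part, with weight the product
       of their interior heights, and seg_weight of a Dyck path is at most n times a sum
       over compositions, which is the A*B sum of the theorem.
*)

section \<open>Lattice paths and the ladder operator\<close>

fun paths :: "nat \<Rightarrow> nat \<Rightarrow> nat list list" where
  "paths h 0 = [[h]]"
| "paths h (Suc j) = map (Cons h) (paths (Suc h) j) @
     (if h > 0 then map (Cons h) (paths (h - 1) j) else [])"

definition step_weight :: "real \<Rightarrow> nat \<Rightarrow> nat \<Rightarrow> real" where
  "step_weight c h h' = (if h' = Suc h then c - real h else real h)"

fun path_weight :: "real \<Rightarrow> nat list \<Rightarrow> real" where
  "path_weight c [] = 1"
| "path_weight c [h] = 1"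
| "path_weight c (h # h' # t) = step_weight c h h' * path_weight c (h' # t)"

definition ladder :: "real \<Rightarrow> (nat \<Rightarrow> real) \<Rightarrow> nat \<Rightarrow> real" where
  "ladder c g h = (c - real h) * g (Suc h) + real h * g (h - 1)"

lemma paths_shape: "p \<in> set (paths h j) \<Longrightarrow> p \<noteq> [] \<and> hd p = h \<and> length p = Suc j"
  by (induction j arbitrary: h p) (auto split: if_splits)

lemma path_weight_Cons:
  "p \<noteq> [] \<Longrightarrow> path_weight c (h # p) = step_weight c h (hd p) * path_weight c p"
  by (cases p) auto

lemma path_weight_up:
  "p \<in> set (paths (Suc h) k) \<Longrightarrow> path_weight c (h # p) = (c - real h) * path_weight c p"
  by (auto dest!: paths_shape simp: path_weight_Cons step_weight_def)

lemma path_weight_down: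
  "h > 0 \<Longrightarrow> p \<in> set (paths (h - 1) k) \<Longrightarrow> path_weight c (h # p) = real h * path_weight c p"
  by (auto dest!: paths_shape simp: path_weight_Cons step_weight_def)

lemma sum_list_map_cong:
  "(\<And>x. x \<in> set xs \<Longrightarrow> f x = g x) \<Longrightarrow> (\<Sum>x\<leftarrow>xs. f x) = (\<Sum>x\<leftarrow>xs. g x)"
  by (metis map_cong)

lemma sum_paths_Suc:
  "(\<Sum>p\<leftarrow>paths h (Suc j). path_weight c p * F (tl p)) =
     (c - real h) * (\<Sum>p\<leftarrow>paths (Suc h) j. path_weight c p * F p) +
     (if h > 0 then real h * (\<Sum>p\<leftarrow>paths (h - 1) j. path_weight c p * F p) else 0)"
proof -
  have up: "(\<Sum>p\<leftarrow>map (Cons h) (paths (Suc h) j). path_weight c p * F (tl p))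
      = (c - real h) * (\<Sum>p\<leftarrow>paths (Suc h) j. path_weight c p * F p)"
    by (simp add: o_def sum_list_const_mult[symmetric] path_weight_up mult.assoc
        cong: map_cong)
  have down: "(\<Sum>p\<leftarrow>map (Cons h) (paths (h - 1) j). path_weight c p * F (tl p))
      = real h * (\<Sum>p\<leftarrow>paths (h - 1) j. path_weight c p * F p)" if "h > 0"
    using that by (simp add: o_def sum_list_const_mult[symmetric] path_weight_down mult.assoc
        cong: map_cong)
  show ?thesis using up down by simp
qed

lemma ladder_pow_paths: "(ladder c ^^ j) g h = (\<Sum>p\<leftarrow>paths h j. path_weight c p * g (last p))"
proof (induction j arbitrary: h)
  case 0
  then show ?case by simp
next
  case (Suc j)
  have "(\<Sum>p\<leftarrow>paths h (Suc j). path_weight c p * g (last p))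
      = (\<Sum>p\<leftarrow>paths h (Suc j). path_weight c p * g (last (tl p)))"
    by (intro sum_list_map_cong) (auto dest: paths_shape)
  also have "\<dots> = (ladder c ^^ Suc j) g h"
    by (simp only: sum_paths_Suc[where F="\<lambda>q. g (last q)"]) (simp add: Suc.IH ladder_def)
  finally show ?case ..
qed

lemma paths_concat:
  "(\<Sum>s\<leftarrow>paths h j. path_weight c s * (\<Sum>r\<leftarrow>paths (last s) m. path_weight c r * X r))
   = (\<Sum>p\<leftarrow>paths h (j + m). path_weight c p * X (drop j p))"
proof (induction j arbitrary: h)
  case 0
  then show ?case by simp
next
  case (Suc j)
  let ?G = "\<lambda>e. \<Sum>r\<leftarrow>paths e m. path_weight c r * X r"
  have "(\<Sum>s\<leftarrow>paths h (Suc j). path_weight c s * ?G (last s))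
      = (\<Sum>s\<leftarrow>paths h (Suc j). path_weight c s * ?G (last (tl s)))"
    by (intro sum_list_map_cong) (auto dest: paths_shape)
  also have "\<dots> = (\<Sum>p\<leftarrow>paths h (Suc (j + m)). path_weight c p * X (drop j (tl p)))"
    by (simp only: sum_paths_Suc[where F="\<lambda>q. ?G (last q)"]
        sum_paths_Suc[where F="\<lambda>q. X (drop j q)"] Suc.IH add_Suc)
  finally show ?case by (simp add: drop_Suc)
qed


section \<open>The chain of exponentiated ladder operators\<close>

text \<open>exp(z L_c) acting on a vector of formal power series in z.\<close>
definition exp_ladder :: "real \<Rightarrow> (nat \<Rightarrow> real fps) \<Rightarrow> nat \<Rightarrow> real fps" where
  "exp_ladder c f h =
     Abs_fps (\<lambda>u. \<Sum>j\<le>u. (ladder c ^^ j) (\<lambda>h'. fps_nth (f h') (u - j)) h / fact j)"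

definition diag_scale :: "real \<Rightarrow> (nat \<Rightarrow> real fps) \<Rightarrow> nat \<Rightarrow> real fps" where
  "diag_scale x f h = fps_const (x ^ h) * f h"

text \<open>chain c x k = exp(z L_c) D_x exp(z L_c) ... D_x exp(z L_c) e_0 with k exponentials.\<close>
fun chain :: "real \<Rightarrow> real \<Rightarrow> nat \<Rightarrow> nat \<Rightarrow> real fps" where
  "chain c x 0 = (\<lambda>h. if h = 0 then 1 else 0)"
| "chain c x (Suc k) = exp_ladder c (if k = 0 then chain c x k else diag_scale x (chain c x k))"

text \<open>The weight of all ways to cut a path p into k consecutive time segments: a segment of
  length j carries 1/j!, every cut except the last one (in time) carries x^height, and the
  path must end at height 0.\<close>
fun seg_weight :: "real \<Rightarrow> nat \<Rightarrow> nat list \<Rightarrow> real" where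
  "seg_weight x 0 p = (if p = [0] then 1 else 0)"
| "seg_weight x (Suc k) p =
     (\<Sum>j<length p. (if k = 0 then 1 else x ^ (p ! j)) * seg_weight x k (drop j p) / fact j)"

lemma ladder_pow_path_expansion:
  assumes f: "\<And>e t. fps_nth (f e) t = w e * (\<Sum>r\<leftarrow>paths e t. path_weight c r * G r)"
    and j: "j \<le> u"
  shows "(ladder c ^^ j) (\<lambda>e. fps_nth (f e) (u - j)) h
       = (\<Sum>p\<leftarrow>paths h u. path_weight c p * (w (p ! j) * G (drop j p)))"
proof -
  have "(ladder c ^^ j) (\<lambda>e. fps_nth (f e) (u - j)) h
      = (\<Sum>s\<leftarrow>paths h j. path_weight c s * (w (last s) *
           (\<Sum>r\<leftarrow>paths (last s) (u - j). path_weight c r * G r)))"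
    by (simp add: ladder_pow_paths f)
  also have "\<dots> = (\<Sum>s\<leftarrow>paths h j. path_weight c s *
           (\<Sum>r\<leftarrow>paths (last s) (u - j). path_weight c r * (w (hd r) * G r)))"
  proof (intro sum_list_map_cong arg_cong2[where f="(*)"] refl)
    fix s
    have "(\<Sum>r\<leftarrow>paths (last s) (u - j). path_weight c r * (w (hd r) * G r))
        = (\<Sum>r\<leftarrow>paths (last s) (u - j). w (last s) * (path_weight c r * G r))"
      by (intro sum_list_map_cong) (auto dest!: paths_shape)
    then show "w (last s) * (\<Sum>r\<leftarrow>paths (last s) (u - j). path_weight c r * G r)
        = (\<Sum>r\<leftarrow>paths (last s) (u - j). path_weight c r * (w (hd r) * G r))"
      by (simp add: sum_list_const_mult)
  qed
  also have "\<dots> = (\<Sum>p\<leftarrow>paths h (j + (u - j)). path_weight c p * (w (hd (drop j p)) * G (drop j p)))"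
    by (rule paths_concat)
  also have "\<dots> = (\<Sum>p\<leftarrow>paths h u. path_weight c p * (w (p ! j) * G (drop j p)))"
    using j by (simp, intro sum_list_map_cong) (auto dest!: paths_shape simp: hd_drop_conv_nth)
  finally show ?thesis .
qed

lemma sum_sum_list_swap:
  "(\<Sum>j\<in>A. \<Sum>p\<leftarrow>xs. f j p) = (\<Sum>p\<leftarrow>xs. \<Sum>j\<in>A. (f j p :: real))"
  by (induction xs) (auto simp: sum.distrib)

lemma sum_list_divide: "(\<Sum>x\<leftarrow>xs. f x) / (k::real) = (\<Sum>x\<leftarrow>xs. f x / k)"
  by (induction xs) (auto simp: add_divide_distrib)

lemma chain_nth_paths:
  "fps_nth (chain c x k h) u = (\<Sum>p\<leftarrow>paths h u. path_weight c p * seg_weight x k p)"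
proof (induction k arbitrary: h u)
  case 0
  show ?case
  proof (cases u)
    case 0
    then show ?thesis by simp
  next
    case (Suc u')
    have "(\<Sum>p\<leftarrow>paths h u. path_weight c p * seg_weight x 0 p) = (\<Sum>p\<leftarrow>paths h u. 0)"
      by (intro sum_list_map_cong) (auto dest!: paths_shape simp: Suc)
    then show ?thesis using Suc by simp
  qed
next
  case (Suc k)
  define w where "w = (\<lambda>h. if k = 0 then 1 else x ^ h)"
  define f where "f = (if k = 0 then chain c x k else diag_scale x (chain c x k))"
  have f: "fps_nth (f e) t = w e * (\<Sum>r\<leftarrow>paths e t. path_weight c r * seg_weight x k r)" for e t
  proof -
    have "fps_nth (f e) t = w e * fps_nth (chain c x k e) t"
      by (simp add: f_def w_def diag_scale_def del: chain.simps)
    then show ?thesis by (simp only: Suc.IH)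
  qed
  have "fps_nth (chain c x (Suc k) h) u
     = (\<Sum>j\<le>u. (\<Sum>p\<leftarrow>paths h u. path_weight c p * (w (p ! j) * seg_weight x k (drop j p))) / fact j)"
    by (simp add: exp_ladder_def ladder_pow_path_expansion[OF f] flip: f_def)
  also have "\<dots> = (\<Sum>p\<leftarrow>paths h u. \<Sum>j\<le>u. path_weight c p * (w (p ! j) * seg_weight x k (drop j p)) / fact j)"
    by (simp add: sum_list_divide sum_sum_list_swap)
  also have "\<dots> = (\<Sum>p\<leftarrow>paths h u. path_weight c p * seg_weight x (Suc k) p)"
  proof (intro sum_list_map_cong)
    fix p assume "p \<in> set (paths h u)"
    then have "{..<length p} = {..u}" by (auto dest!: paths_shape)
    then show "(\<Sum>j\<le>u. path_weight c p * (w (p ! j) * seg_weight x k (drop j p)) / fact j)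
        = path_weight c p * seg_weight x (Suc k) p"
      by (simp add: sum_distrib_left w_def)
  qed
  finally show ?case .
qed


lemma seg_weight_single: "seg_weight x k [h] = (if h = 0 then 1 else 0)"
proof (induction k)
  case 0 then show ?case by simp
next
  case (Suc k)
  have "seg_weight x (Suc k) [h] = (if k = 0 then 1 else x ^ h) * seg_weight x k [h]"
    by (subst seg_weight.simps) simp
  then show ?case using Suc by simp
qed

lemma chain_nth0: "fps_nth (chain c x k 0) 0 = 1"
  by (simp add: chain_nth_paths seg_weight_single)


section \<open>Additivity of the chain in the parameter c\<close>

lemma ladder_cmult: "ladder d (\<lambda>b. k * f b) b = k * ladder d f b"
  by (simp add: ladder_def algebra_simps)

text \<open>Leibniz rule: if g(a+b) is a sum of products U(a) W(b), then L_{c+d} acts on g as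
  L_c on the first factor plus L_d on the second.  This is where the heights add.\<close>
lemma ladder_product_step:
  assumes g: "\<And>a b. g (a + b) = (\<Sum>q\<in>Q. U q a * W q b)"
  shows "ladder (c + d) g (a + b) = (\<Sum>q\<in>Q. ladder c (U q) a * W q b + U q a * ladder d (W q) b)"
proof -
  have h1: "(c - real a) * g (Suc (a + b)) = (\<Sum>q\<in>Q. (c - real a) * U q (Suc a) * W q b)"
    using g[of "Suc a" b] by (simp add: sum_distrib_left mult.assoc)
  have h2: "(d - real b) * g (Suc (a + b)) = (\<Sum>q\<in>Q. U q a * ((d - real b) * W q (Suc b)))"
    using g[of a "Suc b"] by (simp add: sum_distrib_left algebra_simps)
  have h3: "real a * g (a + b - 1) = (\<Sum>q\<in>Q. real a * U q (a - 1) * W q b)"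
  proof (cases a)
    case 0 then show ?thesis by simp
  next
    case (Suc a') then show ?thesis using g[of a' b] by (simp add: sum_distrib_left mult.assoc)
  qed
  have h4: "real b * g (a + b - 1) = (\<Sum>q\<in>Q. U q a * (real b * W q (b - 1)))"
  proof (cases b)
    case 0 then show ?thesis by simp
  next
    case (Suc b') then show ?thesis using g[of a b'] by (simp add: sum_distrib_left algebra_simps)
  qed
  have "ladder (c + d) g (a + b) = (c - real a) * g (Suc (a + b)) + (d - real b) * g (Suc (a + b))
      + real a * g (a + b - 1) + real b * g (a + b - 1)"
    by (simp add: ladder_def algebra_simps)
  also have "\<dots> = (\<Sum>q\<in>Q. ladder c (U q) a * W q b + U q a * ladder d (W q) b)"
    unfolding h1 h2 h3 h4 by (simp add: ladder_def sum.distrib[symmetric] algebra_simps)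
  finally show ?thesis .
qed

lemma pascal_sum:
  fixes X :: "nat \<Rightarrow> nat \<Rightarrow> real"
  shows "(\<Sum>i\<le>j. real (j choose i) * (X (Suc i) (j - i) + X i (Suc j - i)))
       = (\<Sum>i\<le>Suc j. real (Suc j choose i) * X i (Suc j - i))"
proof -
  have r: "(\<Sum>i\<le>Suc j. real (Suc j choose i) * X i (Suc j - i))
     = X 0 (Suc j) + (\<Sum>i\<le>j. real (j choose i) * X (Suc i) (j - i))
        + (\<Sum>i\<le>j. real (j choose Suc i) * X (Suc i) (j - i))"
    by (subst sum.atMost_Suc_shift) (simp add: sum.distrib algebra_simps)
  have l2: "(\<Sum>i\<le>j. real (j choose i) * X i (Suc j - i))
     = X 0 (Suc j) + (\<Sum>i\<le>j. real (j choose Suc i) * X (Suc i) (j - i))"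
  proof (cases j)
    case 0 then show ?thesis by simp
  next
    case (Suc j')
    have "(\<Sum>i\<le>j. real (j choose i) * X i (Suc j - i))
      = X 0 (Suc j) + (\<Sum>i\<le>j'. real (j choose Suc i) * X (Suc i) (j - i))"
      unfolding Suc by (subst sum.atMost_Suc_shift) simp
    also have "(\<Sum>i\<le>j. real (j choose Suc i) * X (Suc i) (j - i))
       = (\<Sum>i\<le>j'. real (j choose Suc i) * X (Suc i) (j - i))"
      unfolding Suc by (simp add: sum.atMost_Suc binomial_eq_0)
    ultimately show ?thesis by simp
  qed
  show ?thesis
    unfolding r by (simp add: sum.distrib algebra_simps l2)
qed

lemma ladder_pow_binomial:
  assumes fin: "finite Q" and g: "\<And>a b. g (a + b) = (\<Sum>q\<in>Q. U q a * W q b)"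
  shows "(ladder (c + d) ^^ j) g (a + b)
     = (\<Sum>i\<le>j. real (j choose i) * (\<Sum>q\<in>Q. (ladder c ^^ i) (U q) a * (ladder d ^^ (j - i)) (W q) b))"
proof (induction j arbitrary: a b)
  case 0
  then show ?case using g by simp
next
  case (Suc j)
  let ?U = "\<lambda>iq. (ladder c ^^ fst iq) (U (snd iq))"
  let ?W = "\<lambda>iq b. real (j choose fst iq) * (ladder d ^^ (j - fst iq)) (W (snd iq)) b"
  have cp: "(\<Sum>iq\<in>{..j} \<times> Q. F iq) = (\<Sum>i\<le>j. \<Sum>q\<in>Q. F (i, q))" for F :: "nat \<times> _ \<Rightarrow> real"
    by (simp add: sum.cartesian_product)
  have rep: "(ladder (c + d) ^^ j) g (a' + b') = (\<Sum>iq\<in>{..j} \<times> Q. ?U iq a' * ?W iq b')" for a' b'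
    unfolding cp by (simp add: Suc.IH sum_distrib_left algebra_simps)
  have "(ladder (c + d) ^^ Suc j) g (a + b) = ladder (c + d) ((ladder (c + d) ^^ j) g) (a + b)"
    by simp
  also have "\<dots> = (\<Sum>iq\<in>{..j} \<times> Q. ladder c (?U iq) a * ?W iq b + ?U iq a * ladder d (?W iq) b)"
    by (rule ladder_product_step[where g="(ladder (c + d) ^^ j) g" and U="?U" and W="?W", OF rep])
  also have "\<dots> = (\<Sum>i\<le>j. real (j choose i) * ((\<Sum>q\<in>Q. (ladder c ^^ Suc i) (U q) a * (ladder d ^^ (j - i)) (W q) b)
        + (\<Sum>q\<in>Q. (ladder c ^^ i) (U q) a * (ladder d ^^ (Suc j - i)) (W q) b)))"
  proof -
    have "(\<Sum>iq\<in>{..j} \<times> Q. ladder c (?U iq) a * ?W iq b + ?U iq a * ladder d (?W iq) b)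
       = (\<Sum>i\<le>j. \<Sum>q\<in>Q. real (j choose i) * ((ladder c ^^ Suc i) (U q) a * (ladder d ^^ (j - i)) (W q) b
          + (ladder c ^^ i) (U q) a * (ladder d ^^ (Suc j - i)) (W q) b))"
    proof (subst cp, intro sum.cong refl)
      fix i q assume i: "i \<in> {..j}"
      have e: "ladder d (\<lambda>b. real (j choose i) * (ladder d ^^ (j - i)) (W q) b) b
          = real (j choose i) * (ladder d ^^ (Suc j - i)) (W q) b"
        using i by (simp add: ladder_cmult Suc_diff_le)
      show "ladder c (?U (i, q)) a * ?W (i, q) b + ?U (i, q) a * ladder d (?W (i, q)) b
        = real (j choose i) * ((ladder c ^^ Suc i) (U q) a * (ladder d ^^ (j - i)) (W q) b
          + (ladder c ^^ i) (U q) a * (ladder d ^^ (Suc j - i)) (W q) b)"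
        using e by (simp add: algebra_simps)
    qed
    then show ?thesis by (simp only: distrib_left sum.distrib sum_distrib_left)
  qed
  also have "\<dots> = (\<Sum>i\<le>Suc j. real (Suc j choose i) * (\<Sum>q\<in>Q. (ladder c ^^ i) (U q) a * (ladder d ^^ (Suc j - i)) (W q) b))"
    by (rule pascal_sum[where X="\<lambda>i k. \<Sum>q\<in>Q. (ladder c ^^ i) (U q) a * (ladder d ^^ k) (W q) b"])
  finally show ?case .
qed

lemma convolution_reindex:
  fixes \<alpha> \<beta> :: "nat \<Rightarrow> nat \<Rightarrow> real"
  shows "(\<Sum>j\<le>s. \<Sum>i\<le>j. \<Sum>p\<le>s-j. \<alpha> i p * \<beta> (j-i) (s-j-p))
       = (\<Sum>q\<le>s. (\<Sum>i\<le>q. \<alpha> i (q-i)) * (\<Sum>k\<le>s-q. \<beta> k (s-q-k)))"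
proof -
  have l: "(\<Sum>j\<le>s. \<Sum>i\<le>j. \<Sum>p\<le>s-j. \<alpha> i p * \<beta> (j-i) (s-j-p))
     = (\<Sum>(j,i,p)\<in>(SIGMA j:{..s}. SIGMA i:{..j}. {..s-j}). \<alpha> i p * \<beta> (j-i) (s-j-p))"
    by (subst sum.Sigma[symmetric], simp, simp, intro sum.cong refl, subst sum.Sigma) auto
  have r: "(\<Sum>q\<le>s. (\<Sum>i\<le>q. \<alpha> i (q-i)) * (\<Sum>k\<le>s-q. \<beta> k (s-q-k)))
     = (\<Sum>(q,i,k)\<in>(SIGMA q:{..s}. SIGMA i:{..q}. {..s-q}). \<alpha> i (q-i) * \<beta> k (s-q-k))"
  proof -
    have "(\<Sum>q\<le>s. (\<Sum>i\<le>q. \<alpha> i (q-i)) * (\<Sum>k\<le>s-q. \<beta> k (s-q-k)))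
       = (\<Sum>q\<le>s. \<Sum>ik\<in>{..q} \<times> {..s-q}. \<alpha> (fst ik) (q - fst ik) * \<beta> (snd ik) (s-q-snd ik))"
      by (intro sum.cong refl) (simp add: sum_product sum.cartesian_product case_prod_beta)
    also have "\<dots> = (\<Sum>(q,i,k)\<in>(SIGMA q:{..s}. SIGMA i:{..q}. {..s-q}). \<alpha> i (q-i) * \<beta> k (s-q-k))"
      by (subst sum.Sigma) (auto simp: case_prod_beta)
    finally show ?thesis .
  qed
  have "(\<Sum>(j,i,p)\<in>(SIGMA j:{..s}. SIGMA i:{..j}. {..s-j}). \<alpha> i p * \<beta> (j-i) (s-j-p))
      = (\<Sum>(q,i,k)\<in>(SIGMA q:{..s}. SIGMA i:{..q}. {..s-q}). \<alpha> i (q-i) * \<beta> k (s-q-k))"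
  proof (rule sum.reindex_bij_witness[where j="\<lambda>(j,i,p). (i+p, i, j-i)" and i="\<lambda>(q,i,k). (i+k, i, q-i)"])
    fix a assume "a \<in> (SIGMA j:{..s}. SIGMA i:{..j}. {..s-j})"
    then obtain j i p where a: "a = (j,i,p)" "j \<le> s" "i \<le> j" "p \<le> s - j" by auto
    show "(case case a of (j, i, p) \<Rightarrow> (i + p, i, j - i) of (q, i, k) \<Rightarrow> (i + k, i, q - i)) = a"
      using a by simp
    show "(case a of (j, i, p) \<Rightarrow> (i + p, i, j - i)) \<in> (SIGMA q:{..s}. SIGMA i:{..q}. {..s - q})"
      using a by simp arith
    have "s - j - p = s - (i + p) - (j - i)" using a by simp
    then show "(case case a of (j, i, p) \<Rightarrow> (i + p, i, j - i) of (q, i, k) \<Rightarrow> \<alpha> i (q - i) * \<beta> k (s - q - k)) =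
         (case a of (j, i, p) \<Rightarrow> \<alpha> i p * \<beta> (j - i) (s - j - p))"
      using a by simp
  next
    fix b assume "b \<in> (SIGMA q:{..s}. SIGMA i:{..q}. {..s - q})"
    then obtain q i k where b: "b = (q,i,k)" "q \<le> s" "i \<le> q" "k \<le> s - q" by auto
    show "(case case b of (q, i, k) \<Rightarrow> (i + k, i, q - i) of (j, i, p) \<Rightarrow> (i + p, i, j - i)) = b"
      using b by simp
    show "(case b of (q, i, k) \<Rightarrow> (i + k, i, q - i)) \<in> (SIGMA j:{..s}. SIGMA i:{..j}. {..s - j})"
      using b by simp arith
  qed
  then show ?thesis using l r by simp
qed

lemma ladder_pow_fps_product:
  assumes f: "\<And>a b. f (a + b) = u a * v b" and j: "j \<le> s"
  shows "(ladder (c + d) ^^ j) (\<lambda>h. fps_nth (f h) (s - j)) (a + b) / fact j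
       = (\<Sum>i\<le>j. \<Sum>p\<le>s-j. (ladder c ^^ i) (\<lambda>h. fps_nth (u h) p) a / fact i *
            ((ladder d ^^ (j - i)) (\<lambda>h. fps_nth (v h) (s - j - p)) b / fact (j - i)))"
proof -
  define X where "X = (\<lambda>i p. (ladder c ^^ i) (\<lambda>h. fps_nth (u h) p) a *
      (ladder d ^^ (j - i)) (\<lambda>h. fps_nth (v h) (s - j - p)) b)"
  have g: "fps_nth (f (a' + b')) (s - j)
      = (\<Sum>p\<in>{..s-j}. (\<lambda>p a. fps_nth (u a) p) p a' * (\<lambda>p b. fps_nth (v b) (s - j - p)) p b')" for a' b'
    by (simp add: f fps_mult_nth atLeast0AtMost)
  have "(ladder (c + d) ^^ j) (\<lambda>h. fps_nth (f h) (s - j)) (a + b)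
     = (\<Sum>i\<le>j. real (j choose i) * (\<Sum>p\<le>s-j. X i p))"
    unfolding X_def by (rule ladder_pow_binomial[where g="\<lambda>h. fps_nth (f h) (s - j)", OF _ g]) simp
  then have "(ladder (c + d) ^^ j) (\<lambda>h. fps_nth (f h) (s - j)) (a + b) / fact j
     = (\<Sum>i\<le>j. \<Sum>p\<le>s-j. real (j choose i) / fact j * X i p)"
    by (simp add: sum_divide_distrib sum_distrib_left)
  also have "\<dots> = (\<Sum>i\<le>j. \<Sum>p\<le>s-j. X i p / (fact i * fact (j - i)))"
    by (intro sum.cong refl) (simp add: binomial_fact)
  finally show ?thesis by (simp add: X_def)
qed

lemma exp_ladder_product:
  assumes f: "\<And>a b. f (a + b) = u a * v b"
  shows "exp_ladder (c + d) f (a + b) = exp_ladder c u a * exp_ladder d v b"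
proof (rule fps_ext)
  fix s
  define \<alpha> where "\<alpha> = (\<lambda>i p. (ladder c ^^ i) (\<lambda>h. fps_nth (u h) p) a / fact i)"
  define \<beta> where "\<beta> = (\<lambda>k l. (ladder d ^^ k) (\<lambda>h. fps_nth (v h) l) b / fact k)"
  have "fps_nth (exp_ladder (c + d) f (a + b)) s
      = (\<Sum>j\<le>s. (ladder (c + d) ^^ j) (\<lambda>h. fps_nth (f h) (s - j)) (a + b) / fact j)"
    by (simp add: exp_ladder_def)
  also have "\<dots> = (\<Sum>j\<le>s. \<Sum>i\<le>j. \<Sum>p\<le>s-j. \<alpha> i p * \<beta> (j-i) (s-j-p))"
    by (intro sum.cong refl) (simp add: ladder_pow_fps_product[where f=f and u=u and v=v, OF f] \<alpha>_def \<beta>_def)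
  also have "\<dots> = (\<Sum>q\<le>s. (\<Sum>i\<le>q. \<alpha> i (q-i)) * (\<Sum>k\<le>s-q. \<beta> k (s-q-k)))"
    by (rule convolution_reindex)
  also have "\<dots> = fps_nth (exp_ladder c u a * exp_ladder d v b) s"
    by (simp add: fps_mult_nth atLeast0AtMost exp_ladder_def \<alpha>_def \<beta>_def)
  finally show "fps_nth (exp_ladder (c + d) f (a + b)) s = fps_nth (exp_ladder c u a * exp_ladder d v b) s" .
qed

text \<open>The chain is multiplicative in the parameter, because the diagonal weight x^(a+b)
  factorises as well.\<close>
lemma chain_add: "chain (c + d) x k (a + b) = chain c x k a * chain d x k b"
proof (induction k arbitrary: a b)
  case 0
  then show ?case by simp
next
  case (Suc k)
  show ?case
  proof (cases "k = 0")
    case True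
    then show ?thesis using Suc.IH by (simp add: exp_ladder_product)
  next
    case False
    have "diag_scale x (chain (c + d) x k) (a' + b') = diag_scale x (chain c x k) a' * diag_scale x (chain d x k) b'" for a' b'
    proof -
      have "fps_const (x ^ (a' + b')) = fps_const (x ^ a') * fps_const (x ^ b')"
        by (simp add: power_add)
      then show ?thesis by (simp add: diag_scale_def Suc.IH mult_ac)
    qed
    then show ?thesis using False by (simp add: exp_ladder_product)
  qed
qed


text \<open>For c = 0 the chain is trivial: every path from 0 starts with an up-step of weight 0.\<close>
lemma chain_zero: "chain 0 x k 0 = 1"
proof (rule fps_ext)
  fix u
  show "fps_nth (chain 0 x k 0) u = fps_nth 1 u"
  proof (cases u)
    case 0
    then show ?thesis by (simp add: chain_nth_paths seg_weight_single)
  next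
    case (Suc u')
    have "(\<Sum>p\<leftarrow>paths 0 u. path_weight 0 p * seg_weight x k p) = (\<Sum>p\<leftarrow>paths 0 u. 0)"
      by (intro sum_list_map_cong) (auto simp: Suc path_weight_up)
    then show ?thesis by (simp add: chain_nth_paths Suc)
  qed
qed

lemma chain_nat_power: "chain (real N) x k 0 = (chain 1 x k 0) ^ N"
proof (induction N)
  case 0 then show ?case by (simp add: chain_zero)
next
  case (Suc N)
  have "chain (real N + 1) x k (0 + 0) = chain (real N) x k 0 * chain 1 x k 0"
    by (rule chain_add)
  then show ?case using Suc by (simp add: mult.commute add.commute)
qed


section \<open>The Ising chain as a transfer product\<close>

text \<open>transfer x n g = exp(z L_1) D_x ... D_x exp(z L_1) g with n exponentials; the recursion
  peels off the innermost (earliest) factor.\<close>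
fun transfer :: "real \<Rightarrow> nat \<Rightarrow> (nat \<Rightarrow> real fps) \<Rightarrow> nat \<Rightarrow> real fps" where
  "transfer x 0 g = g"
| "transfer x (Suc 0) g = exp_ladder 1 g"
| "transfer x (Suc (Suc n)) g = transfer x (Suc n) (diag_scale x (exp_ladder 1 g))"

lemma transfer_outer:
  "transfer x (Suc (Suc n)) g = exp_ladder 1 (diag_scale x (transfer x (Suc n) g))"
  by (induction n arbitrary: g) auto

lemma transfer_Suc: "n \<ge> 1 \<Longrightarrow> transfer x (Suc n) g = transfer x n (diag_scale x (exp_ladder 1 g))"
  by (cases n) auto

lemma chain_transfer: "chain 1 x (Suc k) = transfer x (Suc k) (chain 1 x 0)"
proof (induction k)
  case 0 then show ?case by simp
next
  case (Suc k)
  then show ?case by (simp only: transfer_outer) simp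
qed

lemma ladder1_pow: "e \<le> 1 \<Longrightarrow> (ladder 1 ^^ j) f e = f ((e + j) mod 2)"
proof (induction j arbitrary: e)
  case 0 then show ?case by simp
next
  case (Suc j)
  have "(ladder 1 ^^ Suc j) f e
      = (1 - real e) * (ladder 1 ^^ j) f (Suc e) + real e * (ladder 1 ^^ j) f (e - 1)"
    by (simp only: funpow.simps o_apply ladder_def)
  moreover have "e = 0 \<or> e = 1" using Suc.prems by auto
  moreover have "(0 + Suc j) mod 2 = (1 + j) mod 2" "(1 + Suc j) mod 2 = (0 + j) mod 2"
    by presburger+
  ultimately show ?case using Suc.IH[of 0] Suc.IH[of 1] by auto
qed

text \<open>Hence on heights {0,1}, exp(z L_1) is multiplication by exp(z s) on the vector
  g 0 + s g 1 for a spin s: the magnetisation factor of one site.\<close>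
lemma exp_ladder1_spin:
  assumes s: "s = 1 \<or> s = -1"
  shows "fps_exp s * (g 0 + fps_const s * g 1) = exp_ladder 1 g 0 + fps_const s * exp_ladder 1 g 1"
proof (rule fps_ext)
  fix u
  have parity: "s ^ j * (fps_nth (g 0) t + s * fps_nth (g 1) t)
     = fps_nth (g (j mod 2)) t + s * fps_nth (g (Suc j mod 2)) t" for j t
  proof (cases "even j")
    case True
    then obtain m where "j = 2 * m" by auto
    then show ?thesis using s by (auto simp: power_mult)
  next
    case False
    then obtain m where m: "j = 2 * m + 1" using oddE by blast
    then have "j mod 2 = 1" "Suc j mod 2 = 0" by auto
    moreover have "s ^ j = s" using s m by (auto simp: power_mult)
    ultimately show ?thesis using s by (auto simp: algebra_simps)
  qed
  have "fps_nth (fps_exp s * (g 0 + fps_const s * g 1)) u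
     = (\<Sum>j\<le>u. s ^ j / fact j * (fps_nth (g 0) (u - j) + s * fps_nth (g 1) (u - j)))"
    by (subst fps_mult_nth) (simp add: atLeast0AtMost)
  also have "\<dots> = (\<Sum>j\<le>u. (fps_nth (g (j mod 2)) (u - j) + s * fps_nth (g ((1 + j) mod 2)) (u - j)) / fact j)"
    by (intro sum.cong refl) (simp add: parity[unfolded One_nat_def])
  also have "\<dots> = fps_nth (exp_ladder 1 g 0 + fps_const s * exp_ladder 1 g 1) u"
    by (simp add: exp_ladder_def ladder1_pow sum_distrib_left sum.distrib add_divide_distrib)
  finally show "fps_nth (fps_exp s * (g 0 + fps_const s * g 1)) u
      = fps_nth (exp_ladder 1 g 0 + fps_const s * exp_ladder 1 g 1) u" .
qed

lemma sum_last_spin: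
  assumes t: "t = 1 \<or> t = -1"
  shows "(\<Sum>y\<in>{-1, 1::real}. fps_const (exp (\<beta> * (t * y))) * (P + fps_const y * Q))
    = fps_const (2 * cosh \<beta>) * (P + fps_const (t * tanh \<beta>) * Q)"
proof (rule fps_ext)
  fix u
  have "cosh \<beta> \<noteq> 0" by (simp add: cosh_real_pos[of \<beta>] less_imp_neq[symmetric])
  then have "cosh \<beta> * tanh \<beta> = sinh \<beta>" by (simp add: tanh_def)
  then have "tanh \<beta> * (exp \<beta> + exp (- \<beta>)) = exp \<beta> - exp (- \<beta>)"
    by (simp add: cosh_def sinh_def field_simps)
  then have damp: "tanh \<beta> * exp \<beta> * q + tanh \<beta> * exp (- \<beta>) * q = exp \<beta> * q - exp (- \<beta>) * q"
    for q by (metis distrib_left left_diff_distrib mult.commute)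
  then show "fps_nth (\<Sum>y\<in>{-1, 1::real}. fps_const (exp (\<beta> * (t * y))) * (P + fps_const y * Q)) u
    = fps_nth (fps_const (2 * cosh \<beta>) * (P + fps_const (t * tanh \<beta>) * Q)) u"
    using t damp[of "fps_nth Q u"] by (auto simp: fps_sum_nth cosh_def algebra_simps; linarith)
qed


lemma last_spin_step:
  assumes t: "t = 1 \<or> t = -1"
  shows "(\<Sum>y\<in>{-1, 1::real}. fps_const (exp (\<beta> * (t * y))) * (fps_exp y * (g 0 + fps_const y * g 1)))
     = fps_const (2 * cosh \<beta>) * (diag_scale (tanh \<beta>) (exp_ladder 1 g) 0
         + fps_const t * diag_scale (tanh \<beta>) (exp_ladder 1 g) 1)"
proof -
  have "(\<Sum>y\<in>{-1, 1::real}. fps_const (exp (\<beta> * (t * y))) * (fps_exp y * (g 0 + fps_const y * g 1)))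
     = (\<Sum>y\<in>{-1, 1::real}. fps_const (exp (\<beta> * (t * y))) *
          (exp_ladder 1 g 0 + fps_const y * exp_ladder 1 g 1))"
    using exp_ladder1_spin[of 1 g] exp_ladder1_spin[of "-1" g] by simp
  also have "\<dots> = fps_const (2 * cosh \<beta>) *
      (exp_ladder 1 g 0 + fps_const (t * tanh \<beta>) * exp_ladder 1 g 1)"
    by (rule sum_last_spin[OF t])
  finally show ?thesis by (simp add: diag_scale_def mult.assoc)
qed

lemma sum_PiE_insert:
  "x \<notin> S \<Longrightarrow> (\<Sum>f\<in>PiE (insert x S) T. F f) = (\<Sum>y\<in>T x. \<Sum>g\<in>PiE S T. F (g(x := y)))"
proof -
  assume x: "x \<notin> S"
  have "(\<Sum>f\<in>PiE (insert x S) T. F f) = (\<Sum>yg\<in>T x \<times> PiE S T. F ((\<lambda>(y, g). g(x := y)) yg))"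
    unfolding PiE_insert_eq by (rule sum.reindex[OF inj_combinator[OF x], unfolded o_def])
  also have "\<dots> = (\<Sum>y\<in>T x. \<Sum>g\<in>PiE S T. F (g(x := y)))"
    by (simp add: sum.cartesian_product, intro sum.cong refl) auto
  finally show ?thesis .
qed

lemma sum_configs_Suc:
  "(\<Sum>\<sigma>\<in>configs (Suc n). F \<sigma>) = (\<Sum>\<tau>\<in>configs n. \<Sum>y\<in>{-1, 1}. F (\<tau>(Suc n := y)))"
proof -
  have split: "configs (Suc n) = PiE (insert (Suc n) {1..n}) (\<lambda>_. {-1, 1})"
    unfolding configs_def by (simp add: atLeastAtMostSuc_conv)
  have "(\<Sum>\<sigma>\<in>configs (Suc n). F \<sigma>)
      = (\<Sum>y\<in>{-1, 1}. \<Sum>\<tau>\<in>PiE {1..n} (\<lambda>_. {-1, 1}). F (\<tau>(Suc n := y)))"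
    unfolding split by (rule sum_PiE_insert) simp
  also have "\<dots> = (\<Sum>\<tau>\<in>configs n. \<Sum>y\<in>{-1, 1}. F (\<tau>(Suc n := y)))"
    unfolding configs_def by (rule sum.swap)
  finally show ?thesis .
qed

lemma configs_spin: "\<tau> \<in> configs n \<Longrightarrow> 1 \<le> i \<Longrightarrow> i \<le> n \<Longrightarrow> \<tau> i = 1 \<or> \<tau> i = -1"
  unfolding configs_def by (auto simp: PiE_iff)

lemma ising_weight_extend:
  assumes "n \<ge> 1"
  shows "ising_weight (Suc n) \<beta> (\<tau>(Suc n := y)) = ising_weight n \<beta> \<tau> * exp (\<beta> * (\<tau> n * y))"
proof -
  have "(\<Sum>i\<in>{1..<Suc n}. (\<tau>(Suc n := y)) i * (\<tau>(Suc n := y)) (i + 1))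
      = (\<Sum>i\<in>{1..<n}. \<tau> i * \<tau> (i + 1)) + \<tau> n * y"
    using assms by (simp add: sum.atLeastLessThan_Suc)
  then show ?thesis
    unfolding ising_weight_def by (simp add: distrib_left exp_add)
qed

lemma magnetization_extend: "magnetization (Suc n) (\<tau>(Suc n := y)) = magnetization n \<tau> + y"
  unfolding magnetization_def by simp

definition twisted_gf :: "nat \<Rightarrow> real \<Rightarrow> (nat \<Rightarrow> real fps) \<Rightarrow> real fps" where
  "twisted_gf n \<beta> g = (\<Sum>\<sigma>\<in>configs n. fps_const (ising_weight n \<beta> \<sigma>) *
      fps_exp (magnetization n \<sigma>) * (g 0 + fps_const (\<sigma> n) * g 1))"

lemma twisted_gf_1: "twisted_gf 1 \<beta> g = fps_const 2 * exp_ladder 1 g 0"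
proof -
  have "configs 1 = PiE (insert 1 {}) (\<lambda>_. {-1, 1::real})"
    unfolding configs_def by simp
  then have "twisted_gf 1 \<beta> g = (\<Sum>y\<in>{-1, 1::real}. exp_ladder 1 g 0 + fps_const y * exp_ladder 1 g 1)"
    using exp_ladder1_spin[of 1 g] exp_ladder1_spin[of "-1" g]
    by (simp add: twisted_gf_def sum_PiE_insert ising_weight_def magnetization_def)
  then show ?thesis
    by (simp add: algebra_simps fps_const_neg[symmetric] fps_const_add[symmetric]
        del: fps_const_neg fps_const_add)
qed

lemma twisted_gf_Suc:
  assumes "n \<ge> 1"
  shows "twisted_gf (Suc n) \<beta> g
       = fps_const (2 * cosh \<beta>) * twisted_gf n \<beta> (diag_scale (tanh \<beta>) (exp_ladder 1 g))"
proof -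
  define h where "h = diag_scale (tanh \<beta>) (exp_ladder 1 g)"
  define E where "E = (\<lambda>\<tau>. fps_const (ising_weight n \<beta> \<tau>) * fps_exp (magnetization n \<tau>))"
  have extend: "fps_const (ising_weight (Suc n) \<beta> (\<tau>(Suc n := y))) *
      fps_exp (magnetization (Suc n) (\<tau>(Suc n := y))) * (g 0 + fps_const ((\<tau>(Suc n := y)) (Suc n)) * g 1)
    = E \<tau> * (fps_const (exp (\<beta> * (\<tau> n * y))) * (fps_exp y * (g 0 + fps_const y * g 1)))" for \<tau> y
    using assms by (simp add: E_def ising_weight_extend magnetization_extend fps_exp_add_mult
        fps_const_mult[symmetric] mult_ac del: fps_const_mult)
  have "twisted_gf (Suc n) \<beta> g
     = (\<Sum>\<tau>\<in>configs n. E \<tau> * (\<Sum>y\<in>{-1, 1::real}. fps_const (exp (\<beta> * (\<tau> n * y))) *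
          (fps_exp y * (g 0 + fps_const y * g 1))))"
    unfolding twisted_gf_def by (simp only: sum_configs_Suc extend sum_distrib_left)
  also have "\<dots> = (\<Sum>\<tau>\<in>configs n. E \<tau> * (fps_const (2 * cosh \<beta>) * (h 0 + fps_const (\<tau> n) * h 1)))"
  proof (intro sum.cong refl)
    fix \<tau> assume "\<tau> \<in> configs n"
    then have "\<tau> n = 1 \<or> \<tau> n = -1" using configs_spin assms by auto
    then show "E \<tau> * (\<Sum>y\<in>{-1, 1::real}. fps_const (exp (\<beta> * (\<tau> n * y))) *
          (fps_exp y * (g 0 + fps_const y * g 1)))
        = E \<tau> * (fps_const (2 * cosh \<beta>) * (h 0 + fps_const (\<tau> n) * h 1))"
      unfolding h_def by (simp only: last_spin_step)
  qed
  also have "\<dots> = fps_const (2 * cosh \<beta>) * twisted_gf n \<beta> h"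
    by (simp add: twisted_gf_def E_def sum_distrib_left mult.left_commute)
  finally show ?thesis unfolding h_def .
qed

lemma ising_transfer:
  assumes "n \<ge> 1"
  shows "twisted_gf n \<beta> g = fps_const (2 * (2 * cosh \<beta>) ^ (n - 1)) * transfer (tanh \<beta>) n g 0"
  using assms
proof (induction n arbitrary: g rule: nat_induct_at_least)
  case base
  then show ?case using twisted_gf_1[of \<beta> g] by simp
next
  case (Suc n)
  then show ?case
    by (cases n) (simp_all add: twisted_gf_Suc transfer_Suc mult.assoc
        flip: fps_const_mult)
qed

section \<open>The moment generating function and its cumulants\<close>

definition mgf_fps :: "nat \<Rightarrow> real \<Rightarrow> real fps" where
  "mgf_fps n \<beta> = (\<Sum>\<sigma>\<in>configs n.
     fps_const (ising_weight n \<beta> \<sigma> / partition_fn n \<beta>) * fps_exp (magnetization n \<sigma>))"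

lemma finite_configs: "finite (configs n)"
  unfolding configs_def by (auto intro!: finite_PiE)

lemma configs_nonempty: "configs n \<noteq> {}"
  unfolding configs_def by (auto simp: PiE_eq_empty_iff)

lemma partition_fn_pos: "partition_fn n \<beta> > 0"
  unfolding partition_fn_def ising_weight_def
  using finite_configs configs_nonempty by (intro sum_pos) auto

lemma expect_exp_eq: "ising_expect n \<beta> (\<lambda>\<sigma>. exp (z * magnetization n \<sigma>))
   = (\<Sum>\<sigma>\<in>configs n. ising_weight n \<beta> \<sigma> / partition_fn n \<beta> * exp (magnetization n \<sigma> * z))"
  unfolding ising_expect_def by (simp add: sum_divide_distrib mult_ac)

text \<open>The moment generating function is positive, so its logarithm is smooth.\<close>
lemma expect_exp_pos: "ising_expect n \<beta> (\<lambda>\<sigma>. exp (z * magnetization n \<sigma>)) > 0"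
  unfolding expect_exp_eq using finite_configs configs_nonempty partition_fn_pos[of n \<beta>]
  by (intro sum_pos) (auto simp: ising_weight_def)

lemma expect_exp_fps: "(\<lambda>z. ising_expect n \<beta> (\<lambda>\<sigma>. exp (z * magnetization n \<sigma>))) has_fps_expansion mgf_fps n \<beta>"
  unfolding expect_exp_eq mgf_fps_def
  by (intro has_fps_expansion_sum has_fps_expansion_cmult_left has_fps_expansion_exp)

lemma mgf_fps_nth0: "fps_nth (mgf_fps n \<beta>) 0 = 1"
proof -
  have "fps_nth (mgf_fps n \<beta>) 0 = (\<Sum>\<sigma>\<in>configs n. ising_weight n \<beta> \<sigma>) / partition_fn n \<beta>"
    unfolding mgf_fps_def by (simp add: fps_sum_nth sum_divide_distrib)
  then show ?thesis using partition_fn_pos[of n \<beta>] by (simp add: partition_fn_def)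
qed

text \<open>Transfer-matrix identity for the moment generating function: the normalised sum over
  configurations is the chain with parameter 1 (the normalisation 2 (2 cosh beta)^(n-1) is
  the constant coefficient).\<close>
lemma mgf_fps_chain:
  assumes "n \<ge> 1"
  shows "mgf_fps n \<beta> = chain 1 (tanh \<beta>) n 0"
proof -
  define C where "C = 2 * (2 * cosh \<beta>) ^ (n - 1)"
  obtain k where k: "n = Suc k" using assms by (cases n) auto
  have main: "(\<Sum>\<sigma>\<in>configs n. fps_const (ising_weight n \<beta> \<sigma>) * fps_exp (magnetization n \<sigma>))
      = fps_const C * chain 1 (tanh \<beta>) n 0"
  proof -
    have e: "transfer (tanh \<beta>) n (chain 1 (tanh \<beta>) 0) = chain 1 (tanh \<beta>) n"
      unfolding k by (rule chain_transfer[symmetric])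
    show ?thesis
      using ising_transfer[OF assms, of \<beta> "chain 1 (tanh \<beta>) 0"] unfolding e C_def
      by (simp add: twisted_gf_def del: chain.simps(2))
  qed
  have "partition_fn n \<beta> = fps_nth (\<Sum>\<sigma>\<in>configs n. fps_const (ising_weight n \<beta> \<sigma>) * fps_exp (magnetization n \<sigma>)) 0"
    by (simp add: partition_fn_def fps_sum_nth)
  also have "\<dots> = C" unfolding main by (simp add: chain_nth0)
  finally have Z: "partition_fn n \<beta> = C" .
  have "mgf_fps n \<beta> = fps_const (1 / partition_fn n \<beta>) * (\<Sum>\<sigma>\<in>configs n. fps_const (ising_weight n \<beta> \<sigma>) * fps_exp (magnetization n \<sigma>))"
    unfolding mgf_fps_def by (simp add: sum_distrib_left mult.assoc[symmetric])
  also have "\<dots> = chain 1 (tanh \<beta>) n 0"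
    unfolding main Z using partition_fn_pos[of n \<beta>] Z
    by (simp add: mult.assoc[symmetric] fps_const_mult[symmetric] del: fps_const_mult)
  finally show ?thesis .
qed

lemma expect_exp_deriv:
  "((\<lambda>z. ising_expect n \<beta> (\<lambda>\<sigma>. exp (z * magnetization n \<sigma>))) has_real_derivative
     (\<Sum>\<sigma>\<in>configs n. ising_weight n \<beta> \<sigma> / partition_fn n \<beta> * (exp (magnetization n \<sigma> * z) * magnetization n \<sigma>))) (at z)"
  unfolding expect_exp_eq by (intro DERIV_sum DERIV_cmult) (auto intro!: derivative_eq_intros)

lemma fps_expansion_at0: "f has_fps_expansion F \<Longrightarrow> f 0 = fps_nth F 0"
  by (auto simp: has_fps_expansion_def eval_fps_at_0 dest: eventually_nhds_x_imp_x)

lemma funpow_deriv_fps: "g has_fps_expansion G \<Longrightarrow> (deriv ^^ k) g has_fps_expansion (fps_deriv ^^ k) G"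
  by (induction k) (auto intro: has_fps_expansion_deriv)

lemma cumulant_log_deriv:
  assumes "s \<ge> 1"
  shows "cumulant_M n \<beta> s = fact (s - 1) * fps_nth (fps_deriv (mgf_fps n \<beta>) / mgf_fps n \<beta>) (s - 1)"
proof -
  define f where "f = (\<lambda>z. ising_expect n \<beta> (\<lambda>\<sigma>. exp (z * magnetization n \<sigma>)))"
  have dl: "deriv (\<lambda>z. ln (f z)) = (\<lambda>z. deriv f z / f z)"
  proof
    fix z
    obtain D where D: "(f has_real_derivative D) (at z)"
      using expect_exp_deriv unfolding f_def by blast
    then have "deriv f z = D" by (rule DERIV_imp_deriv)
    then have fd: "(f has_real_derivative deriv f z) (at z)" using D by simp
    have "(ln has_real_derivative 1 / f z) (at (f z))"
      by (rule DERIV_ln_divide) (simp add: f_def expect_exp_pos)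
    then have "((\<lambda>z. ln (f z)) has_real_derivative (1 / f z * deriv f z)) (at z)"
      by (rule DERIV_chain2[OF _ fd])
    then show "deriv (\<lambda>z. ln (f z)) z = deriv f z / f z"
      by (simp add: DERIV_imp_deriv)
  qed
  have fe: "(\<lambda>z. deriv f z / f z) has_fps_expansion fps_deriv (mgf_fps n \<beta>) / mgf_fps n \<beta>"
    using expect_exp_fps mgf_fps_nth0 unfolding f_def
    by (intro has_fps_expansion_divide' has_fps_expansion_deriv) auto
  obtain k where k: "s = Suc k" using assms by (cases s) auto
  have "cumulant_M n \<beta> s = (deriv ^^ k) (deriv (\<lambda>z. ln (f z))) 0"
    unfolding cumulant_M_def k f_def by (simp only: funpow_Suc_right o_apply)
  also have "\<dots> = (deriv ^^ k) (\<lambda>z. deriv f z / f z) 0"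
    by (simp only: dl)
  also have "\<dots> = fps_nth ((fps_deriv ^^ k) (fps_deriv (mgf_fps n \<beta>) / mgf_fps n \<beta>)) 0"
    by (rule fps_expansion_at0[OF funpow_deriv_fps[OF fe]])
  also have "\<dots> = fact (s - 1) * fps_nth (fps_deriv (mgf_fps n \<beta>) / mgf_fps n \<beta>) (s - 1)"
    by (simp add: fps_0th_higher_deriv k)
  finally show ?thesis .
qed


section \<open>Dependence on the parameter c and the cumulant formula\<close>

definition step_poly :: "nat \<Rightarrow> nat \<Rightarrow> real poly" where
  "step_poly h h' = (if h' = Suc h then [:- real h, 1:] else [:real h:])"

fun path_poly :: "nat list \<Rightarrow> real poly" where
  "path_poly [] = 1"
| "path_poly [h] = 1"
| "path_poly (h # h' # t) = step_poly h h' * path_poly (h' # t)"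

lemma poly_path_poly: "poly (path_poly p) c = path_weight c p"
  by (induction p rule: path_poly.induct) (auto simp: step_poly_def step_weight_def)

definition chain_poly :: "real \<Rightarrow> nat \<Rightarrow> nat \<Rightarrow> real poly" where
  "chain_poly x k u = (\<Sum>p\<leftarrow>paths 0 u. smult (seg_weight x k p) (path_poly p))"

lemma poly_sum_list_smult: "poly (\<Sum>p\<leftarrow>xs. smult (a p) (q p)) c = (\<Sum>p\<leftarrow>xs. a p * poly (q p) c)"
  by (induction xs) auto

lemma coeff_sum_list_smult: "coeff (\<Sum>p\<leftarrow>xs. smult (a p) (q p)) i = (\<Sum>p\<leftarrow>xs. a p * coeff (q p) i)"
  by (induction xs) auto

lemma poly_chain_poly: "poly (chain_poly x k u) c = fps_nth (chain c x k 0) u"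
  unfolding chain_poly_def poly_sum_list_smult chain_nth_paths by (simp add: poly_path_poly mult.commute)

lemma poly_eq_on_positive_nats:
  fixes p q :: "real poly"
  assumes "\<And>N::nat. N \<ge> 1 \<Longrightarrow> poly p (real N) = poly q (real N)"
  shows "p = q"
proof (rule ccontr)
  assume "p \<noteq> q"
  then have "p - q \<noteq> 0" by simp
  then have fin: "finite {x. poly (p - q) x = 0}" by (rule poly_roots_finite)
  have "poly (p - q) (real (Suc N)) = 0" for N
    using assms[of "Suc N"] by simp
  then have "range (\<lambda>N. real (Suc N)) \<subseteq> {x. poly (p - q) x = 0}"
    by auto
  moreover have "infinite (range (\<lambda>N. real (Suc N)))"
    by (rule range_inj_infinite) (auto simp: inj_on_def)
  ultimately show False using fin finite_subset by blast
qed


text \<open>Write F for the chain with parameter 1 and Q = F'/F.  Differentiating F^N = N F^(N-1) F'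
  = N F^N Q coefficientwise gives a polynomial identity in N, which therefore holds as an
  identity of polynomials in c.\<close>
lemma chain_poly_deriv_identity:
  fixes x :: real and k t :: nat
  defines "F \<equiv> chain 1 x k 0"
  defines "Q \<equiv> fps_deriv F / F"
  shows "smult (real (Suc t)) (chain_poly x k (Suc t))
       = [:0, 1:] * (\<Sum>i\<le>t. smult (fps_nth Q (t - i)) (chain_poly x k i))"
proof (rule poly_eq_on_positive_nats)
  fix N :: nat assume N: "N \<ge> 1"
  have FQ: "F * Q = fps_deriv F"
    unfolding Q_def F_def using chain_nth0[of 1 x k]
    by (simp add: fps_divide_unit mult.left_commute inverse_mult_eq_1')
  have FN: "fps_nth (F ^ N) i = poly (chain_poly x k i) (real N)" for i
    by (simp add: poly_chain_poly chain_nat_power F_def)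
  have "fps_deriv (F ^ N) = of_nat N * fps_deriv F * F ^ (N - 1)"
    by (rule fps_deriv_power')
  also have "\<dots> = of_nat N * (F ^ N * Q)"
  proof -
    have "F ^ N = F * F ^ (N - 1)" using N by (cases N) auto
    then show ?thesis by (simp add: FQ[symmetric] mult_ac)
  qed
  finally have d: "fps_deriv (F ^ N) = of_nat N * (F ^ N * Q)" .
  have "fps_nth (fps_deriv (F ^ N)) t = real (Suc t) * fps_nth (F ^ N) (Suc t)"
    by simp
  moreover have "fps_nth (of_nat N * (F ^ N * Q)) t
      = real N * (\<Sum>i\<le>t. fps_nth (F ^ N) i * fps_nth Q (t - i))"
    by (subst fps_of_nat[symmetric], subst fps_mult_left_const_nth)
      (simp add: fps_mult_nth atLeast0AtMost)
  ultimately have "real (Suc t) * fps_nth (F ^ N) (Suc t)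
      = real N * (\<Sum>i\<le>t. fps_nth (F ^ N) i * fps_nth Q (t - i))"
    using d by simp
  then show "poly (smult (real (Suc t)) (chain_poly x k (Suc t))) (real N)
      = poly ([:0, 1:] * (\<Sum>i\<le>t. smult (fps_nth Q (t - i)) (chain_poly x k i))) (real N)"
    by (simp add: FN poly_sum mult_ac)
qed

text \<open>Comparing the coefficients of c^1, and using that the chain with c = 0 is trivial: the
  logarithmic derivative of the chain is the linear part in c of its coefficients.  This is
  the formal version of log F = d/dN F^N at N = 0.\<close>
lemma chain_log_deriv_coeff:
  "fps_nth (fps_deriv (chain 1 x k 0) / chain 1 x k 0) t
     = real (Suc t) * coeff (chain_poly x k (Suc t)) 1"
proof -
  define Q where "Q = fps_deriv (chain 1 x k 0) / chain 1 x k 0"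
  have "real (Suc t) * coeff (chain_poly x k (Suc t)) 1
      = coeff (\<Sum>i\<le>t. smult (fps_nth Q (t - i)) (chain_poly x k i)) 0"
    using arg_cong[OF chain_poly_deriv_identity[where x=x and k=k and t=t], of "\<lambda>p. coeff p 1"]
    by (simp add: Q_def)
  also have "\<dots> = (\<Sum>i\<le>t. fps_nth Q (t - i) * poly (chain_poly x k i) 0)"
    by (simp add: coeff_sum poly_0_coeff_0)
  also have "\<dots> = (\<Sum>i\<le>t. if i = 0 then fps_nth Q (t - i) else 0)"
    by (intro sum.cong refl) (simp add: poly_chain_poly chain_zero)
  also have "\<dots> = fps_nth Q t" by simp
  finally show ?thesis by (simp add: Q_def)
qed

lemma cumulant_chain_poly:
  assumes "n \<ge> 1" and "s \<ge> 1"
  shows "cumulant_M n \<beta> s = fact s * coeff (chain_poly (tanh \<beta>) n s) 1"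
proof -
  obtain t where t: "s = Suc t" using assms(2) by (cases s) auto
  have "cumulant_M n \<beta> s = fact t * (real (Suc t) * coeff (chain_poly (tanh \<beta>) n s) 1)"
    using cumulant_log_deriv[OF assms(2), of n \<beta>]
    by (simp add: mgf_fps_chain[OF assms(1)] chain_log_deriv_coeff t)
  then show ?thesis by (simp add: t)
qed


section \<open>Estimating the linear part by Dyck paths\<close>

definition is_path :: "nat \<Rightarrow> nat \<Rightarrow> nat list \<Rightarrow> bool" where
  "is_path h j p \<longleftrightarrow> length p = Suc j \<and> p ! 0 = h \<and> (\<forall>k<j. p ! (k+1) = p ! k + 1 \<or> p ! k = p ! (k+1) + 1)"

lemma paths_is_path: "p \<in> set (paths h j) \<Longrightarrow> is_path h j p"
proof (induction j arbitrary: h p)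
  case 0 then show ?case by (auto simp: is_path_def)
next
  case (Suc j)
  then obtain q h' where p: "p = h # q" and q: "q \<in> set (paths h' j)" and h': "h' = Suc h \<or> (h > 0 \<and> h' = h - 1)"
    by (auto split: if_splits)
  have iq: "is_path h' j q" using Suc.IH[OF q] .
  show ?case unfolding is_path_def
  proof (intro conjI allI impI)
    show "length p = Suc (Suc j)" using iq p by (simp add: is_path_def)
    show "p ! 0 = h" using p by simp
    fix k assume k: "k < Suc j"
    show "p ! (k + 1) = p ! k + 1 \<or> p ! k = p ! (k + 1) + 1"
    proof (cases k)
      case 0 then show ?thesis using p iq h' by (auto simp: is_path_def)
    next
      case (Suc k') then show ?thesis using p iq k by (auto simp: is_path_def)
    qed
  qed
qed

lemma is_path_paths: "is_path h j p \<Longrightarrow> p \<in> set (paths h j)"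
proof (induction j arbitrary: h p)
  case 0
  then obtain a where "p = [a]" by (cases p) (auto simp: is_path_def)
  then show ?case using 0 by (simp add: is_path_def)
next
  case (Suc j)
  obtain a q where p: "p = a # q" using Suc.prems by (cases p) (auto simp: is_path_def)
  have a: "a = h" using Suc.prems p by (simp add: is_path_def)
  have lq: "length q = Suc j" using Suc.prems p by (simp add: is_path_def)
  have st: "\<forall>k<j. q ! (k+1) = q ! k + 1 \<or> q ! k = q ! (k+1) + 1"
  proof (intro allI impI)
    fix k assume "k < j"
    then have "Suc k < Suc j" by simp
    then have "p ! (Suc k + 1) = p ! Suc k + 1 \<or> p ! Suc k = p ! (Suc k + 1) + 1"
      using Suc.prems unfolding is_path_def by blast
    then show "q ! (k+1) = q ! k + 1 \<or> q ! k = q ! (k+1) + 1"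
      using p by simp
  qed
  have s0: "q ! 0 = Suc h \<or> h = q ! 0 + 1"
  proof -
    have "p ! (0 + 1) = p ! 0 + 1 \<or> p ! 0 = p ! (0 + 1) + 1"
      using Suc.prems unfolding is_path_def by blast
    then show ?thesis using p a by simp
  qed
  have iq: "is_path (q ! 0) j q" using lq st by (simp add: is_path_def)
  from s0 show ?case
  proof
    assume "q ! 0 = Suc h"
    then show ?thesis using Suc.IH[OF iq] p a by auto
  next
    assume "h = q ! 0 + 1"
    then show ?thesis using Suc.IH[OF iq] p a by auto
  qed
qed

lemma distinct_paths: "distinct (paths h j)"
proof (induction j arbitrary: h)
  case 0 then show ?case by simp
next
  case (Suc j)
  have "set (map (Cons h) (paths (Suc h) j)) \<inter> set (map (Cons h) (paths (h - 1) j)) = {}" if "h > 0"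
    using that by (auto dest!: paths_shape)
  then show ?case using Suc by (auto simp: distinct_map)
qed

lemma seg_weight_last: "seg_weight x k p \<noteq> 0 \<Longrightarrow> p \<noteq> [] \<and> last p = 0"
proof (induction k arbitrary: p)
  case 0 then show ?case by (auto split: if_splits)
next
  case (Suc k)
  then obtain j where j: "j < length p" and g: "seg_weight x k (drop j p) \<noteq> 0"
    by (auto elim: sum.not_neutral_contains_not_neutral)
  then show ?case using Suc.IH[OF g] by auto
qed

lemma seg_weight_nonneg: "x \<ge> 0 \<Longrightarrow> seg_weight x k p \<ge> 0"
  by (induction k arbitrary: p) (auto intro!: sum_nonneg)

text \<open>At c = 0 only down-steps survive up to sign: the absolute weight is the product of
  the heights.\<close>
lemma abs_path_weight0: "q \<noteq> [] \<Longrightarrow> \<bar>path_weight 0 q\<bar> = (\<Prod>i<length q - 1. real (q ! i))"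
proof (induction q rule: path_poly.induct)
  case 1 then show ?case by simp
next
  case (2 h) then show ?case by simp
next
  case (3 h h' t)
  have "\<bar>path_weight 0 (h # h' # t)\<bar> = real h * \<bar>path_weight 0 (h' # t)\<bar>"
    by (simp add: step_weight_def abs_mult)
  also have "\<dots> = real h * (\<Prod>i<length t. real ((h' # t) ! i))"
    using 3 by simp
  also have "\<dots> = (\<Prod>i<length (h # h' # t) - 1. real ((h # h' # t) ! i))"
  proof -
    have l: "length (h # h' # t) - 1 = Suc (length t)" by simp
    show ?thesis by (simp only: l prod.lessThan_Suc_shift nth_Cons_0 nth_Cons_Suc)
  qed
  finally show ?case .
qed

definition height_prod :: "nat list \<Rightarrow> real" where
  "height_prod p = (\<Prod>k = 1..length p - 2. real (p ! k))"

text \<open>A path from 0 starts with the up-step of weight c; the coefficient of c^1 of its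
  weight is thus the weight at c = 0 of the rest, whose absolute value is height_prod.\<close>
lemma coeff1_path_poly:
  assumes "p \<in> set (paths 0 (Suc j))"
  shows "\<bar>coeff (path_poly p) 1\<bar> = height_prod p"
proof -
  obtain q where p: "p = 0 # q" and q: "q \<in> set (paths 1 j)" using assms by auto
  obtain t where qt: "q = 1 # t" using paths_shape[OF q] by (cases q) auto
  have "coeff (path_poly p) 1 = coeff ([:0, 1:] * path_poly q) 1"
    unfolding p qt by (simp add: step_poly_def)
  also have "\<dots> = path_weight 0 q"
    by (simp add: poly_0_coeff_0[symmetric] poly_path_poly)
  finally have "\<bar>coeff (path_poly p) 1\<bar> = (\<Prod>i<length q - 1. real (q ! i))"
    using abs_path_weight0[of q] qt by simp
  also have "\<dots> = height_prod p"
    unfolding height_prod_def p using qt by (simp add: prod.atLeast1_atMost_eq)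
  finally show ?thesis .
qed

lemma coeff1_chain_poly_bound:
  assumes x: "x \<ge> 0" and s: "s \<ge> 1"
  shows "\<bar>coeff (chain_poly x k s) 1\<bar> \<le> (\<Sum>p\<leftarrow>paths 0 s. seg_weight x k p * height_prod p)"
proof -
  obtain j where j: "s = Suc j" using s by (cases s) auto
  have "\<bar>coeff (chain_poly x k s) 1\<bar> = \<bar>\<Sum>p\<leftarrow>paths 0 s. seg_weight x k p * coeff (path_poly p) 1\<bar>"
    by (simp add: chain_poly_def coeff_sum_list_smult)
  also have "\<dots> \<le> (\<Sum>p\<leftarrow>paths 0 s. \<bar>seg_weight x k p * coeff (path_poly p) 1\<bar>)"
    using sum_list_abs[of "map (\<lambda>p. seg_weight x k p * coeff (path_poly p) 1) (paths 0 s)"]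
    by (simp add: o_def)
  also have "\<dots> = (\<Sum>p\<leftarrow>paths 0 s. seg_weight x k p * height_prod p)"
  proof (intro sum_list_map_cong)
    fix p assume "p \<in> set (paths 0 s)"
    then have "p \<in> set (paths 0 (Suc j))" using j by simp
    from coeff1_path_poly[OF this] show "\<bar>seg_weight x k p * coeff (path_poly p) 1\<bar> = seg_weight x k p * height_prod p"
      by (simp add: abs_mult seg_weight_nonneg[OF x])
  qed
  finally show ?thesis .
qed

lemma dyck_is_path: "\<delta> \<in> dyck_star s \<Longrightarrow> is_path 0 s \<delta>"
  unfolding dyck_star_def is_path_def by auto


lemma contributing_path_dyck:
  assumes p: "p \<in> set (paths 0 s)"
    and seg: "seg_weight x k p \<noteq> 0" and heights: "height_prod p \<noteq> 0"
  shows "p \<in> dyck_star s"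
proof -
  have walk: "is_path 0 s p" using p paths_is_path by blast
  then have l: "length p = Suc s" by (simp add: is_path_def)
  then have "p ! s = 0" using seg_weight_last[OF seg] last_conv_nth[of p] by auto
  moreover have "1 \<le> p ! k" if "1 \<le> k" "k \<le> s - 1" for k
    using heights that l by (force simp: height_prod_def)
  ultimately show ?thesis using walk unfolding dyck_star_def is_path_def by auto
qed

lemma paths_to_dyck:
  "(\<Sum>p\<leftarrow>paths 0 s. seg_weight x k p * height_prod p)
     = (\<Sum>\<delta>\<in>dyck_star s. seg_weight x k \<delta> * height_prod \<delta>)"
proof -
  have sub: "dyck_star s \<subseteq> set (paths 0 s)" using dyck_is_path is_path_paths by blast
  have "(\<Sum>p\<leftarrow>paths 0 s. seg_weight x k p * height_prod p)
      = (\<Sum>p\<in>set (paths 0 s). seg_weight x k p * height_prod p)"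
    by (simp add: sum_list_distinct_conv_sum_set distinct_paths)
  also have "\<dots> = (\<Sum>\<delta>\<in>dyck_star s. seg_weight x k \<delta> * height_prod \<delta>)"
    by (rule sum.mono_neutral_right) (use sub contributing_path_dyck[of _ s x k] in auto)
  finally show ?thesis .
qed


section \<open>Compositions and descent sets\<close>

lemma compositions_0: "compositions 0 = {[]}"
proof -
  have "c = []" if "\<forall>x\<in>set c. 0 < x" "sum_list c = (0::nat)" for c
    using that by (cases c) auto
  then show ?thesis unfolding compositions_def by auto
qed

lemma compositions_nonempty: "m \<ge> 1 \<Longrightarrow> c \<in> compositions m \<Longrightarrow> c \<noteq> []"
  unfolding compositions_def by auto

lemma compositions_split:
  assumes "m \<ge> 1"
  shows "compositions m = insert [m] (\<Union>j\<in>{1..<m}. (Cons j) ` compositions (m - j))"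
proof
  show "compositions m \<subseteq> insert [m] (\<Union>j\<in>{1..<m}. (Cons j) ` compositions (m - j))"
  proof
    fix c assume c: "c \<in> compositions m"
    then obtain a c' where ac: "c = a # c'" using compositions_nonempty[OF assms] by (cases c) auto
    have pos: "\<forall>i\<in>set c'. 0 < i" "0 < a" and sm: "a + sum_list c' = m"
      using c ac unfolding compositions_def by auto
    show "c \<in> insert [m] (\<Union>j\<in>{1..<m}. (Cons j) ` compositions (m - j))"
    proof (cases "c' = []")
      case True then show ?thesis using ac sm by simp
    next
      case False
      then obtain b c'' where "c' = b # c''" by (cases c') auto
      then have "sum_list c' > 0" using pos by auto
      then have "a \<in> {1..<m}" "c' \<in> compositions (m - a)"
        using pos sm unfolding compositions_def by auto
      then show ?thesis using ac by blast
    qed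
  qed
next
  show "insert [m] (\<Union>j\<in>{1..<m}. (Cons j) ` compositions (m - j)) \<subseteq> compositions m"
    using assms unfolding compositions_def by auto
qed

lemma finite_compositions: "finite (compositions m)"
proof (induction m rule: less_induct)
  case (less m)
  show ?case
  proof (cases "m = 0")
    case True then show ?thesis by (simp add: compositions_0)
  next
    case False
    then have "m \<ge> 1" by simp
    then show ?thesis unfolding compositions_split[OF \<open>m \<ge> 1\<close>]
      using less by auto
  qed
qed

lemma descent_set_image: "descent_set c = (\<lambda>i. sum_list (take i c)) ` {1..<length c}"
  unfolding descent_set_def by auto

lemma descent_set_single: "descent_set [m] = {}"
  unfolding descent_set_def by auto

lemma descent_set_Cons:
  assumes "c \<noteq> []"
  shows "descent_set (j # c) = insert j ((+) j ` descent_set c)"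
proof -
  have "{1..<length (j # c)} = insert 1 (Suc ` {1..<length c})"
    using assms by (auto simp: image_iff intro: exI[of _ "_ - 1"])
  then show ?thesis by (simp add: descent_set_image image_image del: image_Suc_atLeastLessThan)
qed

lemma descent_set_pos:
  assumes "c \<in> compositions m" "d \<in> descent_set c"
  shows "d \<ge> 1"
proof -
  obtain i where i: "d = sum_list (take i c)" "1 \<le> i" "i < length c"
    using assms(2) unfolding descent_set_def by auto
  obtain a c' where ac: "c = a # c'" using i by (cases c) auto
  have "a > 0" using assms(1) ac unfolding compositions_def by auto
  obtain i' where "i = Suc i'" using i by (cases i) auto
  then have "d = a + sum_list (take i' c')" using i ac by simp
  then show ?thesis using \<open>a > 0\<close> by simp
qed

lemma finite_descent_set: "finite (descent_set c)"
  by (simp add: descent_set_image)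

lemma sum_compositions_split:
  assumes "m \<ge> 1"
  shows "(\<Sum>c\<in>compositions m. f c)
       = f [m] + (\<Sum>j\<in>{1..<m}. \<Sum>c\<in>compositions (m - j). f (j # c))"
proof -
  have notin: "[m] \<notin> (\<Union>j\<in>{1..<m}. (Cons j) ` compositions (m - j))"
    using compositions_nonempty[of _ "[]"] by fastforce
  have "(\<Sum>c\<in>compositions m. f c) = f [m] + (\<Sum>c\<in>(\<Union>j\<in>{1..<m}. (Cons j) ` compositions (m - j)). f c)"
    unfolding compositions_split[OF assms] using notin finite_compositions by (simp add: sum.insert)
  also have "(\<Sum>c\<in>(\<Union>j\<in>{1..<m}. (Cons j) ` compositions (m - j)). f c)
      = (\<Sum>j\<in>{1..<m}. \<Sum>c\<in>(Cons j) ` compositions (m - j). f c)"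
    by (rule sum.UNION_disjoint) (auto simp: finite_compositions)
  also have "\<dots> = (\<Sum>j\<in>{1..<m}. \<Sum>c\<in>compositions (m - j). f (j # c))"
  proof (rule sum.cong[OF refl])
    fix j
    show "(\<Sum>c\<in>(Cons j) ` compositions (m - j). f c) = (\<Sum>c\<in>compositions (m - j). f (j # c))"
      by (subst sum.reindex) (auto simp: inj_on_def)
  qed
  finally show ?thesis .
qed

definition descent_factor :: "real \<Rightarrow> nat list \<Rightarrow> nat \<Rightarrow> real" where
  "descent_factor x \<delta> u = x ^ (\<delta> ! u) / (1 - x ^ (\<delta> ! u))"

definition comp_weight :: "real \<Rightarrow> nat list \<Rightarrow> nat \<Rightarrow> nat list \<Rightarrow> real" where
  "comp_weight x \<delta> t c =
     (\<Prod>i<length c. 1 / fact (c ! i)) * (\<Prod>d\<in>descent_set c. descent_factor x \<delta> (t + d))"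

definition comp_sum :: "real \<Rightarrow> nat \<Rightarrow> nat list \<Rightarrow> nat \<Rightarrow> real" where
  "comp_sum x s \<delta> t = (\<Sum>c\<in>compositions (s - t). comp_weight x \<delta> t c)"

definition comp_term :: "real \<Rightarrow> nat \<Rightarrow> nat list \<Rightarrow> nat \<Rightarrow> real" where
  "comp_term x s \<delta> u = (if u = s then 1 else descent_factor x \<delta> u * comp_sum x s \<delta> u)"

lemma comp_weight_single: "comp_weight x \<delta> t [m] = 1 / fact m"
  by (simp add: comp_weight_def descent_set_single)

lemma comp_weight_Cons:
  assumes "c \<in> compositions m" and "m \<ge> 1"
  shows "comp_weight x \<delta> t (j # c)
       = 1 / fact j * descent_factor x \<delta> (t + j) * comp_weight x \<delta> (t + j) c"
proof -
  have "c \<noteq> []" using compositions_nonempty assms by blast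
  moreover have "j \<notin> (+) j ` descent_set c" using descent_set_pos[OF assms(1)] by force
  ultimately have descents: "(\<Prod>d\<in>descent_set (j # c). descent_factor x \<delta> (t + d))
      = descent_factor x \<delta> (t + j) * (\<Prod>d\<in>descent_set c. descent_factor x \<delta> (t + j + d))"
    by (simp add: descent_set_Cons finite_descent_set prod.reindex inj_on_def add.assoc)
  have parts: "(\<Prod>i<length (j # c). 1 / fact ((j # c) ! i)) = 1 / fact j * (\<Prod>i<length c. 1 / fact (c ! i))"
    by (simp only: length_Cons prod.lessThan_Suc_shift nth_Cons_0 nth_Cons_Suc)
  show ?thesis unfolding comp_weight_def descents parts by (simp add: mult_ac)
qed

lemma comp_sum_rec:
  assumes "t < s"
  shows "comp_sum x s \<delta> t = (\<Sum>j\<in>{1..s-t}. comp_term x s \<delta> (t + j) / fact j)"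
proof -
  define m where "m = s - t"
  have m1: "m \<ge> 1" using assms by (simp add: m_def)
  have "comp_sum x s \<delta> t
      = 1 / fact m + (\<Sum>j\<in>{1..<m}. \<Sum>c\<in>compositions (m - j).
           1 / fact j * descent_factor x \<delta> (t + j) * comp_weight x \<delta> (t + j) c)"
    unfolding comp_sum_def m_def[symmetric] sum_compositions_split[OF m1] comp_weight_single
    by (intro arg_cong2[where f="(+)"] sum.cong refl comp_weight_Cons) auto
  also have "\<dots> = 1 / fact m + (\<Sum>j\<in>{1..<m}. comp_term x s \<delta> (t + j) / fact j)"
    by (intro arg_cong2[where f="(+)"] sum.cong refl)
      (auto simp: comp_term_def comp_sum_def m_def sum_distrib_left sum_divide_distrib diff_diff_left)
  also have "\<dots> = (\<Sum>j\<in>{1..m}. comp_term x s \<delta> (t + j) / fact j)"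
  proof -
    have "{1..m} = insert m {1..<m}" using m1 by auto
    moreover have "comp_term x s \<delta> (t + m) = 1" using assms by (simp add: comp_term_def m_def)
    ultimately show ?thesis by simp
  qed
  finally show ?thesis unfolding m_def .
qed


section \<open>Bounding the segment weight of a Dyck path\<close>

locale dyck_path =
  fixes x :: real and s :: nat and \<delta> :: "nat list"
  assumes x0: "0 < x" and x1: "x < 1" and s1: "s \<ge> 1" and dy: "\<delta> \<in> dyck_star s"
begin

lemma dyck_length: "length \<delta> = Suc s" using dy by (simp add: dyck_star_def)
lemma dyck_last: "\<delta> ! s = 0" using dy by (simp add: dyck_star_def)
lemma dyck_first: "\<delta> ! 0 = 0" using dy by (simp add: dyck_star_def)
lemma dyck_interior_pos: "0 < u \<Longrightarrow> u < s \<Longrightarrow> \<delta> ! u \<ge> 1" using dy by (simp add: dyck_star_def)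

text \<open>At interior positions the damping x^height is strictly below 1, so the descent
  factors x^h/(1 - x^h) are finite.\<close>
lemma power_height_lt1: "0 < u \<Longrightarrow> u < s \<Longrightarrow> x ^ (\<delta> ! u) < 1"
proof -
  assume "0 < u" "u < s"
  then have "\<delta> ! u \<ge> 1" by (rule dyck_interior_pos)
  then show ?thesis using x0 x1 by (simp add: power_less_one_iff)
qed

lemma power_le1: "x ^ k \<le> 1" using x0 x1 by (simp add: power_le_one)

lemma descent_factor_nonneg: "descent_factor x \<delta> u \<ge> 0"
  unfolding descent_factor_def using power_le1[of "\<delta> ! u"] x0 by simp

lemma comp_sum_nonneg: "comp_sum x s \<delta> t \<ge> 0"
  unfolding comp_sum_def comp_weight_def using descent_factor_nonneg
  by (intro sum_nonneg mult_nonneg_nonneg prod_nonneg) auto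

lemma comp_term_nonneg: "comp_term x s \<delta> u \<ge> 0"
  unfolding comp_term_def using descent_factor_nonneg comp_sum_nonneg by simp

text \<open>The bound for the segment weight of the tail of delta from position u: a geometric series
  in the number of cuts at u, times the composition sum for the remaining steps.\<close>
definition seg_bound :: "nat \<Rightarrow> real" where
  "seg_bound u = (if u = s then 1 else comp_sum x s \<delta> u / (1 - x ^ (\<delta> ! u)))"

lemma seg_bound_nonneg: "seg_bound u \<ge> 0"
  unfolding seg_bound_def using comp_sum_nonneg power_le1[of "\<delta> ! u"] by simp

lemma drop_eq_last: "u \<le> s \<Longrightarrow> (drop u \<delta> = [0]) \<longleftrightarrow> u = s"
proof
  assume u: "u \<le> s" and "drop u \<delta> = [0]"
  then have "length (drop u \<delta>) = 1" by simp
  then show "u = s" using dyck_length u by simp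
next
  assume "u = s"
  then show "drop u \<delta> = [0]" using dyck_length dyck_last
    by (metis Cons_nth_drop_Suc append_Nil2 append_take_drop_id drop_all lessI order_refl same_append_eq)
qed

lemma seg_weight_unfold:
  assumes "t \<le> s"
  shows "seg_weight x (Suc k) (drop t \<delta>)
    = (if k = 0 then 1 else x ^ (\<delta> ! t)) * seg_weight x k (drop t \<delta>)
      + (\<Sum>j<s - t. (if k = 0 then 1 else x ^ (\<delta> ! (t + Suc j))) * seg_weight x k (drop (t + Suc j) \<delta>) / fact (Suc j))"
proof -
  have l: "length (drop t \<delta>) = Suc (s - t)" using dyck_length assms by simp
  have "seg_weight x (Suc k) (drop t \<delta>) = (\<Sum>j<Suc (s - t). (if k = 0 then 1 else x ^ (drop t \<delta> ! j)) * seg_weight x k (drop j (drop t \<delta>)) / fact j)"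
    by (subst seg_weight.simps) (simp only: l)
  also have "\<dots> = (\<Sum>j<Suc (s - t). (if k = 0 then 1 else x ^ (\<delta> ! (t + j))) * seg_weight x k (drop (t + j) \<delta>) / fact j)"
    using dyck_length assms by (intro sum.cong refl) (simp add: nth_drop add.commute)
  also have "\<dots> = (if k = 0 then 1 else x ^ (\<delta> ! t)) * seg_weight x k (drop t \<delta>)
      + (\<Sum>j<s - t. (if k = 0 then 1 else x ^ (\<delta> ! (t + Suc j))) * seg_weight x k (drop (t + Suc j) \<delta>) / fact (Suc j))"
    by (subst sum.lessThan_Suc_shift) simp
  finally show ?thesis .
qed

lemma seg_term_bound:
  assumes H: "\<And>u. 0 < u \<Longrightarrow> u \<le> s \<Longrightarrow> seg_weight x k (drop u \<delta>) \<le> seg_bound u"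
    and u: "0 < u" "u \<le> s"
  shows "(if k = 0 then 1 else x ^ (\<delta> ! u)) * seg_weight x k (drop u \<delta>) \<le> comp_term x s \<delta> u"
proof (cases "k = 0")
  case True
  then show ?thesis using drop_eq_last[OF u(2)] comp_term_nonneg[of u] by (auto simp: comp_term_def)
next
  case False
  have "x ^ (\<delta> ! u) * seg_weight x k (drop u \<delta>) \<le> x ^ (\<delta> ! u) * seg_bound u"
    using H[OF u] x0 by (intro mult_left_mono) auto
  also have "\<dots> = comp_term x s \<delta> u"
  proof (cases "u = s")
    case True then show ?thesis by (simp add: seg_bound_def comp_term_def dyck_last)
  next
    case False
    then show ?thesis by (simp add: seg_bound_def comp_term_def descent_factor_def)
  qed
  finally show ?thesis using False by simp
qed

lemma seg_rest_bound:
  assumes H: "\<And>u. 0 < u \<Longrightarrow> u \<le> s \<Longrightarrow> seg_weight x k (drop u \<delta>) \<le> seg_bound u"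
    and t: "t < s"
  shows "(\<Sum>j<s - t. (if k = 0 then 1 else x ^ (\<delta> ! (t + Suc j))) * seg_weight x k (drop (t + Suc j) \<delta>) / fact (Suc j))
     \<le> comp_sum x s \<delta> t"
proof -
  have "(\<Sum>j<s - t. (if k = 0 then 1 else x ^ (\<delta> ! (t + Suc j))) * seg_weight x k (drop (t + Suc j) \<delta>) / fact (Suc j))
     \<le> (\<Sum>j<s - t. comp_term x s \<delta> (t + Suc j) / fact (Suc j))"
    using t by (intro sum_mono divide_right_mono seg_term_bound[OF H]) auto
  also have "\<dots> = (\<Sum>j\<in>{1..s - t}. comp_term x s \<delta> (t + j) / fact j)"
    by (simp add: sum.atLeast1_atMost_eq)
  also have "\<dots> = comp_sum x s \<delta> t" using comp_sum_rec[OF t] by simp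
  finally show ?thesis .
qed

text \<open>Tails starting in the interior: the number of cuts at the starting point is
  unbounded, but each costs x^height < 1, which gives a geometric series.\<close>
lemma seg_weight_tail_bound: "0 < t \<Longrightarrow> t \<le> s \<Longrightarrow> seg_weight x k (drop t \<delta>) \<le> seg_bound t"
proof (induction k arbitrary: t)
  case 0
  then show ?case using drop_eq_last[of t] seg_bound_nonneg[of t] by (auto simp: seg_bound_def)
next
  case (Suc k)
  show ?case
  proof (cases "t = s")
    case True
    then have "drop t \<delta> = [0]" using drop_eq_last by simp
    then show ?thesis using True by (simp add: seg_weight_single seg_bound_def)
  next
    case False
    then have ts: "t < s" using Suc.prems by simp
    have pl: "x ^ (\<delta> ! t) < 1" using power_height_lt1 Suc.prems ts by simp
    have a: "(if k = 0 then 1 else x ^ (\<delta> ! t)) * seg_weight x k (drop t \<delta>) \<le> x ^ (\<delta> ! t) * seg_bound t"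
    proof (cases "k = 0")
      case True
      then show ?thesis using drop_eq_last[of t] ts seg_bound_nonneg[of t] x0 by simp
    next
      case False
      then show ?thesis using Suc.IH[OF Suc.prems] x0 by (simp add: mult_left_mono)
    qed
    have "seg_weight x (Suc k) (drop t \<delta>) \<le> x ^ (\<delta> ! t) * seg_bound t + comp_sum x s \<delta> t"
      unfolding seg_weight_unfold[OF Suc.prems(2)] using a seg_rest_bound[OF Suc.IH ts] by linarith
    also have "\<dots> = seg_bound t"
      using pl ts by (simp add: seg_bound_def field_simps)
    finally show ?thesis .
  qed
qed

text \<open>The whole path: at position 0 no damping occurs, but there are at most k cuts,
  each followed by at most the composition sum.  This gives the factor n of the theorem.\<close>
lemma seg_weight_bound: "seg_weight x k \<delta> \<le> real k * comp_sum x s \<delta> 0"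
proof (induction k)
  case 0
  have "\<delta> \<noteq> [0]" using dyck_length s1 by auto
  then show ?case by simp
next
  case (Suc k)
  have rest: "(\<Sum>j<s - 0. (if k = 0 then 1 else x ^ (\<delta> ! (0 + Suc j))) * seg_weight x k (drop (0 + Suc j) \<delta>) / fact (Suc j))
     \<le> comp_sum x s \<delta> 0"
    by (rule seg_rest_bound[OF seg_weight_tail_bound]) (use s1 in auto)
  have unfold: "seg_weight x (Suc k) (drop 0 \<delta>) = (if k = 0 then 1 else x ^ (\<delta> ! 0)) * seg_weight x k (drop 0 \<delta>)
      + (\<Sum>j<s - 0. (if k = 0 then 1 else x ^ (\<delta> ! (0 + Suc j))) * seg_weight x k (drop (0 + Suc j) \<delta>) / fact (Suc j))"
    by (rule seg_weight_unfold[OF le0])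
  have "(if k = 0 then 1 else x ^ (\<delta> ! 0)) * seg_weight x k (drop 0 \<delta>) = seg_weight x k \<delta>"
    by (simp add: dyck_first)
  then have "seg_weight x (Suc k) (drop 0 \<delta>) \<le> seg_weight x k \<delta> + comp_sum x s \<delta> 0"
    using unfold rest by linarith
  then show ?case using Suc.IH by (simp add: algebra_simps)
qed

end


section \<open>The cumulant bound\<close>

lemma abs_cumulant_le_dyck:
  assumes "\<beta> \<ge> 0" and "n \<ge> 1" and "s \<ge> 1"
  shows "\<bar>cumulant_M n \<beta> s\<bar>
       \<le> fact s * (\<Sum>\<delta>\<in>dyck_star s. seg_weight (tanh \<beta>) n \<delta> * height_prod \<delta>)"
proof -
  have "tanh \<beta> \<ge> 0" using assms(1) by (simp add: tanh_real_nonneg_iff)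
  then have "\<bar>coeff (chain_poly (tanh \<beta>) n s) 1\<bar>
      \<le> (\<Sum>\<delta>\<in>dyck_star s. seg_weight (tanh \<beta>) n \<delta> * height_prod \<delta>)"
    using coeff1_chain_poly_bound[OF _ assms(3)] paths_to_dyck by metis
  then show ?thesis
    by (simp add: cumulant_chain_poly[OF assms(2,3)] abs_mult)
qed

lemma dyck_sum_bound:
  assumes "0 < x" and "x < 1" and "s \<ge> 1"
  shows "(\<Sum>\<delta>\<in>dyck_star s. seg_weight x k \<delta> * height_prod \<delta>)
       \<le> real k * (\<Sum>\<delta>\<in>dyck_star s. comp_sum x s \<delta> 0 * height_prod \<delta>)"
  unfolding sum_distrib_left mult.assoc[symmetric]
proof (intro sum_mono mult_right_mono)
  fix \<delta> assume "\<delta> \<in> dyck_star s"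
  then interpret dyck_path x s \<delta> using assms by unfold_locales
  show "seg_weight x k \<delta> \<le> real k * comp_sum x s \<delta> 0" by (rule seg_weight_bound)
  show "0 \<le> height_prod \<delta>" unfolding height_prod_def by (intro prod_nonneg) auto
qed

lemma comp_sum_coef:
  "fact (2 * r) * comp_sum x (2 * r) \<delta> 0 = (\<Sum>c\<in>compositions (2 * r). coefA r c * coefB x c \<delta>)"
proof -
  have "fact (2 * r) * comp_weight x \<delta> 0 c = coefA r c * coefB x c \<delta>" for c
  proof -
    have "(\<Prod>i<length c. 1 / fact (c ! i) :: real) = 1 / (\<Prod>i<length c. fact (c ! i))"
      by (simp add: prod_dividef)
    then show ?thesis
      unfolding comp_weight_def coefA_def coefB_def descent_factor_def by simp
  qed
  then show ?thesis by (simp add: comp_sum_def sum_distrib_left)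
qed

lemma height_prod_coefC: "\<delta> \<in> dyck_star (2 * r) \<Longrightarrow> height_prod \<delta> = coefC r \<delta>"
  unfolding height_prod_def coefC_def dyck_star_def by simp

lemma dyck_comp_sum_eq:
  "(\<Sum>\<delta>\<in>dyck_star (2 * r). fact (2 * r) * comp_sum x (2 * r) \<delta> 0 * height_prod \<delta>)
     = (\<Sum>c\<in>compositions (2 * r). \<Sum>\<delta>\<in>dyck_star (2 * r). coefA r c * coefB x c \<delta> * coefC r \<delta>)"
  by (subst sum.swap) (simp add: comp_sum_coef height_prod_coefC sum_distrib_right)

theorem theorem5p2:
  fixes \<beta> :: real and r n :: nat
  assumes "\<beta> > 0" and "r \<ge> 1" and "n \<ge> 1"
  shows "\<bar>cumulant_M n \<beta> (2*r)\<bar> / real n \<le>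
    (\<Sum>c\<in>compositions (2*r). \<Sum>\<delta>\<in>dyck_star (2*r).
        coefA r c * coefB (tanh \<beta>) c \<delta> * coefC r \<delta>)"
proof -
  define s where "s = 2 * r"
  define x where "x = tanh \<beta>"
  have s: "s \<ge> 1" using assms(2) by (simp add: s_def)
  have x: "0 < x" "x < 1" using assms(1) by (simp_all add: x_def tanh_real_pos_iff tanh_real_lt_1)
  have "\<bar>cumulant_M n \<beta> s\<bar> \<le> fact s * (\<Sum>\<delta>\<in>dyck_star s. seg_weight x n \<delta> * height_prod \<delta>)"
    unfolding x_def using assms(1,3) s by (intro abs_cumulant_le_dyck) auto
  also have "\<dots> \<le> fact s * (real n * (\<Sum>\<delta>\<in>dyck_star s. comp_sum x s \<delta> 0 * height_prod \<delta>))"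
    using dyck_sum_bound[OF x s] by (intro mult_left_mono) auto
  also have "\<dots> = real n * (\<Sum>\<delta>\<in>dyck_star s. fact s * comp_sum x s \<delta> 0 * height_prod \<delta>)"
    by (simp add: sum_distrib_left mult_ac)
  finally have "\<bar>cumulant_M n \<beta> (2 * r)\<bar> \<le> real n *
      (\<Sum>c\<in>compositions (2 * r). \<Sum>\<delta>\<in>dyck_star (2 * r).
          coefA r c * coefB (tanh \<beta>) c \<delta> * coefC r \<delta>)"
    unfolding s_def x_def dyck_comp_sum_eq .
  then show ?thesis using assms(3) by (simp add: divide_le_eq mult.commute)
qed

end
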